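(* Let $V$ be a finite-dimensional vector space over a division ring, and let $k_1,k_2$ be integers with $1<k_1<\dim V-1$ and $k_1+k_2=\dim V$. Then $$\mathcal{H}_{k_1,k_2}(V)=\{(U_1,U_2)\in\mathrm{Sub}_{k_1}(V)\times\mathrm{Sub}_{k_2}(V): \dim(U_1\cap U_2)>0\}$$ is a non-degenerate, non-spiky hyperplane of the Segre product $\mathbf{P}_{k_1}(V)\otimes\mathbf{P}_{k_2}(V)$.
   Context: $\mathrm{Sub}_m(V)$ is the set of $m$-dimensional subspaces of $V$. The Grassmann space $\mathbf{P}_m(V)$ has points $\mathrm{Sub}_m(V)$ and lines the pencils $\{U\in\mathrm{Sub}_m(V):H\subseteq U\subseteq B\}$ for $H\in\mathrm{Sub}_{m-1}(V)$, $B\in\mathrm{Sub}_{m+1}(V)$, $H\subseteq B$. Segre product of two partial linear spaces $(S_1,\mathcal{L}_1),(S_2,\mathcal{L}_2)$: points $S_1\times S_2$, lines $l\times\{b\}$ and $\{a\}\times m$ with $l\in\mathcal{L}_1$, $m\in\mathcal{L}_2$. Points are collinear if on a common line. Subspace: any line meeting it in at least two points lies in it; hyperplane: proper subspace meeting every line; a set $X$ is spiky if every point of $X$ is collinear with some point outside $X$. For $\mathcal{H}\subseteq S_1\times S_2$ and $a=(a_1,a_2)$: $\mathcal{H}^{[a]}_1=\{x:(x,a_2)\in\mathcal{H}\}$, $\mathcal{H}^{[a]}_2=\{y:(a_1,y)\in\mathcal{H}\}$; a hyperplane $\mathcal{H}$ is non-degenerate if all these sets are hyperplanes of the respective factors.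 *)

theory Defs
  imports Main
begin

text \<open>The vector space V is the carrier UNIV of a type 'v (an additive abelian group)
with a scalar multiplication by a division ring 'k.\<close>

definition vs_axioms :: "('k::division_ring \<Rightarrow> 'v::ab_group_add \<Rightarrow> 'v) \<Rightarrow> bool" where
  "vs_axioms sm \<longleftrightarrow>
     (\<forall>a x y. sm a (x + y) = sm a x + sm a y) \<and>
     (\<forall>a b x. sm (a + b) x = sm a x + sm b x) \<and>
     (\<forall>a b x. sm (a * b) x = sm a (sm b x)) \<and>
     (\<forall>x. sm 1 x = x)"

definition vspan :: "('k::division_ring \<Rightarrow> 'v::ab_group_add \<Rightarrow> 'v) \<Rightarrow> 'v set \<Rightarrow> 'v set" where
  "vspan sm S = {(\<Sum>v\<in>T. sm (c v) v) | T c. finite T \<and> T \<subseteq> S}"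

definition vindependent :: "('k::division_ring \<Rightarrow> 'v::ab_group_add \<Rightarrow> 'v) \<Rightarrow> 'v set \<Rightarrow> bool" where
  "vindependent sm S \<longleftrightarrow>
     (\<forall>T c. finite T \<and> T \<subseteq> S \<and> (\<Sum>v\<in>T. sm (c v) v) = 0 \<longrightarrow> (\<forall>v\<in>T. c v = 0))"

definition vsubspace :: "('k::division_ring \<Rightarrow> 'v::ab_group_add \<Rightarrow> 'v) \<Rightarrow> 'v set \<Rightarrow> bool" where
  "vsubspace sm U \<longleftrightarrow> 0 \<in> U \<and> (\<forall>x\<in>U. \<forall>y\<in>U. x + y \<in> U) \<and> (\<forall>a. \<forall>x\<in>U. sm a x \<in> U)"

definition vbasis :: "('k::division_ring \<Rightarrow> 'v::ab_group_add \<Rightarrow> 'v) \<Rightarrow> 'v set \<Rightarrow> 'v set \<Rightarrow> bool" where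
  "vbasis sm U B \<longleftrightarrow> B \<subseteq> U \<and> vindependent sm B \<and> vspan sm B = U"

definition findim :: "('k::division_ring \<Rightarrow> 'v::ab_group_add \<Rightarrow> 'v) \<Rightarrow> bool" where
  "findim sm \<longleftrightarrow> (\<exists>B. finite B \<and> vspan sm B = UNIV)"

definition vdim :: "('k::division_ring \<Rightarrow> 'v::ab_group_add \<Rightarrow> 'v) \<Rightarrow> 'v set \<Rightarrow> nat" where
  "vdim sm U = card (SOME B. finite B \<and> vbasis sm U B)"

definition Sub :: "('k::division_ring \<Rightarrow> 'v::ab_group_add \<Rightarrow> 'v) \<Rightarrow> nat \<Rightarrow> 'v set set" where
  "Sub sm m = {U. vsubspace sm U \<and> vdim sm U = m}"

type_synonym 'p pls = "'p set \<times> 'p set set"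

definition grassmann :: "('k::division_ring \<Rightarrow> 'v::ab_group_add \<Rightarrow> 'v) \<Rightarrow> nat \<Rightarrow> 'v set pls" where
  "grassmann sm m = (Sub sm m,
     {{U \<in> Sub sm m. H \<subseteq> U \<and> U \<subseteq> B} | H B.
        H \<in> Sub sm (m - 1) \<and> B \<in> Sub sm (m + 1) \<and> H \<subseteq> B})"

definition segre :: "'a pls \<Rightarrow> 'b pls \<Rightarrow> ('a \<times> 'b) pls" where
  "segre P Q = (fst P \<times> fst Q,
     {l \<times> {b} | l b. l \<in> snd P \<and> b \<in> fst Q} \<union> {{a} \<times> m | a m. a \<in> fst P \<and> m \<in> snd Q})"

definition collinear_pts :: "'p pls \<Rightarrow> 'p \<Rightarrow> 'p \<Rightarrow> bool" where
  "collinear_pts P x y \<longleftrightarrow> (\<exists>l\<in>snd P. x \<in> l \<and> y \<in> l)"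

definition pls_subspace :: "'p pls \<Rightarrow> 'p set \<Rightarrow> bool" where
  "pls_subspace P X \<longleftrightarrow> X \<subseteq> fst P \<and>
     (\<forall>l\<in>snd P. (\<exists>x y. x \<noteq> y \<and> x \<in> l \<inter> X \<and> y \<in> l \<inter> X) \<longrightarrow> l \<subseteq> X)"

definition hyperplane :: "'p pls \<Rightarrow> 'p set \<Rightarrow> bool" where
  "hyperplane P X \<longleftrightarrow> pls_subspace P X \<and> X \<noteq> fst P \<and> (\<forall>l\<in>snd P. l \<inter> X \<noteq> {})"

definition spiky :: "'p pls \<Rightarrow> 'p set \<Rightarrow> bool" where
  "spiky P X \<longleftrightarrow> (\<forall>x\<in>X. \<exists>y\<in>fst P - X. collinear_pts P x y)"

definition slice1 :: "('a \<times> 'b) set \<Rightarrow> ('a \<times> 'b) \<Rightarrow> 'a set" where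
  "slice1 H a = {x. (x, snd a) \<in> H}"

definition slice2 :: "('a \<times> 'b) set \<Rightarrow> ('a \<times> 'b) \<Rightarrow> 'b set" where
  "slice2 H a = {y. (fst a, y) \<in> H}"

definition nondegenerate_hyperplane :: "'a pls \<Rightarrow> 'b pls \<Rightarrow> ('a \<times> 'b) set \<Rightarrow> bool" where
  "nondegenerate_hyperplane P Q H \<longleftrightarrow> hyperplane (segre P Q) H \<and>
     (\<forall>a \<in> fst P \<times> fst Q. hyperplane P (slice1 H a) \<and> hyperplane Q (slice2 H a))"

end

theory Submission
  imports Defs
begin

text \<open>
  If \<open>dim A + m = dim V\<close>, the \<open>m\<close>-subspaces meeting \<open>A\<close> nontrivially form a hyperplane of
  the Grassmann space: every pencil \<open>H \<subset> U \<subset> B\<close> has a member through a nonzero vector of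
  \<open>B \<inter> A\<close>, which exists by Grassmann's dimension formula; and if two members meet \<open>A\<close>,
  then \<open>H\<close> meets \<open>A\<close> or \<open>dim (B \<inter> A) \<ge> 2\<close>, and either way every member meets \<open>A\<close>.
  The slices of the set of pairs \<open>(U\<^sub>1, U\<^sub>2)\<close> with \<open>U\<^sub>1 \<inter> U\<^sub>2 \<noteq> 0\<close> are hyperplanes of this
  kind, and a set of points of a Segre product whose slices are hyperplanes is a hyperplane.
  It is not spiky: if \<open>dim (U\<^sub>1 \<inter> U\<^sub>2) \<ge> 2\<close>, every point collinear with \<open>(U\<^sub>1, U\<^sub>2)\<close>
  shares one component with it and a hyperplane of the other, and that hyperplane still
  meets \<open>U\<^sub>1 \<inter> U\<^sub>2\<close>.
\<close>

section \<open>Segre products and Grassmann spaces\<close>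

lemma segre_lineE:
  assumes "L \<in> snd (segre P Q)"
  obtains (left) l b where "L = l \<times> {b}" "l \<in> snd P" "b \<in> fst Q"
    | (right) a m where "L = {a} \<times> m" "a \<in> fst P" "m \<in> snd Q"
  using assms unfolding segre_def by auto

lemma collinear_segreE:
  assumes "collinear_pts (segre P Q) (a, b) y"
  obtains (left) x where "y = (x, b)" "collinear_pts P a x"
    | (right) z where "y = (a, z)" "collinear_pts Q b z"
  using assms unfolding collinear_pts_def segre_def by fastforce

lemma pls_subspace_segreI:
  assumes "H \<subseteq> fst P \<times> fst Q"
    and slice1: "\<And>b. b \<in> fst Q \<Longrightarrow> pls_subspace P {x. (x, b) \<in> H}"
    and slice2: "\<And>a. a \<in> fst P \<Longrightarrow> pls_subspace Q {y. (a, y) \<in> H}"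
  shows "pls_subspace (segre P Q) H"
  unfolding pls_subspace_def
proof (intro conjI ballI impI)
  show "H \<subseteq> fst (segre P Q)"
    using assms(1) by (simp add: segre_def)
next
  fix L assume L: "L \<in> snd (segre P Q)" and two: "\<exists>x y. x \<noteq> y \<and> x \<in> L \<inter> H \<and> y \<in> L \<inter> H"
  from L show "L \<subseteq> H"
  proof (cases rule: segre_lineE)
    case (left l b)
    with two obtain x y where "x \<noteq> y" "x \<in> l \<inter> {x. (x, b) \<in> H}" "y \<in> l \<inter> {x. (x, b) \<in> H}"
      by fastforce
    with slice1[OF left(3)] left(2) have "l \<subseteq> {x. (x, b) \<in> H}"
      unfolding pls_subspace_def by blast
    with left(1) show ?thesis by auto
  next
    case (right a m)
    with two obtain x y where "x \<noteq> y" "x \<in> m \<inter> {y. (a, y) \<in> H}" "y \<in> m \<inter> {y. (a, y) \<in> H}"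
      by fastforce
    with slice2[OF right(2)] right(3) have "m \<subseteq> {y. (a, y) \<in> H}"
      unfolding pls_subspace_def by blast
    with right(1) show ?thesis by auto
  qed
qed

lemma hyperplane_segreI:
  assumes sub: "H \<subseteq> fst P \<times> fst Q" and q: "q \<in> fst Q"
    and slice1: "\<And>b. b \<in> fst Q \<Longrightarrow> hyperplane P {x. (x, b) \<in> H}"
    and slice2: "\<And>a. a \<in> fst P \<Longrightarrow> hyperplane Q {y. (a, y) \<in> H}"
  shows "hyperplane (segre P Q) H"
  unfolding hyperplane_def
proof (intro conjI ballI)
  show "pls_subspace (segre P Q) H"
    using sub slice1 slice2 unfolding hyperplane_def by (intro pls_subspace_segreI) auto
  from slice1[OF q] obtain x where "x \<in> fst P" "(x, q) \<notin> H"
    unfolding hyperplane_def pls_subspace_def by auto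
  with q show "H \<noteq> fst (segre P Q)"
    by (auto simp: segre_def)
next
  fix L assume "L \<in> snd (segre P Q)"
  then show "L \<inter> H \<noteq> {}"
  proof (cases rule: segre_lineE)
    case (left l b)
    with slice1[OF left(3)] show ?thesis unfolding hyperplane_def by blast
  next
    case (right a m)
    with slice2[OF right(2)] show ?thesis unfolding hyperplane_def by blast
  qed
qed

lemma nondegenerate_hyperplaneI:
  assumes "H \<subseteq> fst P \<times> fst Q" and pt: "(p, q) \<in> fst P \<times> fst Q"
    and slice1: "\<And>a. a \<in> fst P \<times> fst Q \<Longrightarrow> hyperplane P (slice1 H a)"
    and slice2: "\<And>a. a \<in> fst P \<times> fst Q \<Longrightarrow> hyperplane Q (slice2 H a)"
  shows "nondegenerate_hyperplane P Q H"
proof -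
  have "hyperplane (segre P Q) H"
  proof (rule hyperplane_segreI)
    show "hyperplane P {x. (x, b) \<in> H}" if "b \<in> fst Q" for b
      using slice1[of "(p, b)"] pt that by (simp add: slice1_def)
    show "hyperplane Q {y. (a, y) \<in> H}" if "a \<in> fst P" for a
      using slice2[of "(a, q)"] pt that by (simp add: slice2_def)
  qed (use assms in auto)
  with slice1 slice2 show ?thesis
    unfolding nondegenerate_hyperplane_def by blast
qed

lemma grassmann_points [simp]: "fst (grassmann sm m) = Sub sm m"
  by (simp add: grassmann_def)

lemma grassmann_lineE:
  assumes "l \<in> snd (grassmann sm m)"
  obtains H B where "H \<in> Sub sm (m - 1)" "B \<in> Sub sm (m + 1)" "H \<subseteq> B"
    "l = {U \<in> Sub sm m. H \<subseteq> U \<and> U \<subseteq> B}"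
  using assms unfolding grassmann_def by auto

section \<open>Left vector spaces over a division ring\<close>

locale left_vector_space =
  fixes sm :: "'k::division_ring \<Rightarrow> 'v::ab_group_add \<Rightarrow> 'v"
  assumes vs_axioms: "vs_axioms sm"
begin

abbreviation "span \<equiv> vspan sm"
abbreviation "independent \<equiv> vindependent sm"
abbreviation "subspace \<equiv> vsubspace sm"
abbreviation "dim \<equiv> vdim sm"

lemma scale_right_distrib: "sm a (x + y) = sm a x + sm a y"
  using vs_axioms unfolding vs_axioms_def by blast

lemma scale_left_distrib: "sm (a + b) x = sm a x + sm b x"
  using vs_axioms unfolding vs_axioms_def by blast

lemma scale_scale: "sm a (sm b x) = sm (a * b) x"
  using vs_axioms unfolding vs_axioms_def by simp

lemma scale_one [simp]: "sm 1 x = x"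
  using vs_axioms unfolding vs_axioms_def by blast

lemma scale_zero_left [simp]: "sm 0 x = 0"
  using scale_left_distrib[of 0 0 x] by simp

lemma scale_zero_right [simp]: "sm a 0 = 0"
  using scale_right_distrib[of a 0 0] by simp

lemma scale_minus_left: "sm (- a) x = - sm a x"
  using scale_left_distrib[of "- a" a x] by (simp add: eq_neg_iff_add_eq_0)

lemma scale_inverse_cancel [simp]: "a \<noteq> 0 \<Longrightarrow> sm (inverse a) (sm a x) = x"
  by (simp add: scale_scale)

lemma scale_sum_right: "sm a (\<Sum>v\<in>T. f v) = (\<Sum>v\<in>T. sm a (f v))"
  by (induction T rule: infinite_finite_induct) (simp_all add: scale_right_distrib)

lemma subspace_UNIV: "subspace UNIV"
  by (simp add: vsubspace_def)

lemma subspace_Int: "subspace U \<Longrightarrow> subspace W \<Longrightarrow> subspace (U \<inter> W)"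
  by (simp add: vsubspace_def)

lemma subspace_0: "subspace U \<Longrightarrow> 0 \<in> U"
  by (simp add: vsubspace_def)

lemma subspace_add: "subspace U \<Longrightarrow> x \<in> U \<Longrightarrow> y \<in> U \<Longrightarrow> x + y \<in> U"
  by (simp add: vsubspace_def)

lemma subspace_scale: "subspace U \<Longrightarrow> x \<in> U \<Longrightarrow> sm a x \<in> U"
  by (simp add: vsubspace_def)

lemma subspace_neg: "subspace U \<Longrightarrow> x \<in> U \<Longrightarrow> - x \<in> U"
  using subspace_scale[of U x "- 1"] by (simp add: scale_minus_left)

lemma subspace_sum: "subspace U \<Longrightarrow> (\<And>v. v \<in> T \<Longrightarrow> f v \<in> U) \<Longrightarrow> (\<Sum>v\<in>T. f v) \<in> U"
  by (induction T rule: infinite_finite_induct) (simp_all add: subspace_0 subspace_add)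

lemma sum_scale_in_span: "finite T \<Longrightarrow> T \<subseteq> S \<Longrightarrow> (\<Sum>v\<in>T. sm (c v) v) \<in> span S"
  unfolding vspan_def by blast

lemma sum_scale_extend:
  assumes "finite T'" "T \<subseteq> T'"
  shows "(\<Sum>v\<in>T. sm (c v) v) = (\<Sum>v\<in>T'. sm (if v \<in> T then c v else 0) v)"
proof -
  have "(\<Sum>v\<in>T'. sm (if v \<in> T then c v else 0) v) = (\<Sum>v\<in>T'. if v \<in> T then sm (c v) v else 0)"
    by (rule sum.cong) auto
  also have "\<dots> = (\<Sum>v\<in>T' \<inter> T. sm (c v) v)"
    using assms(1) by (rule sum.inter_restrict[symmetric])
  finally show ?thesis
    using assms(2) by (simp add: Int_absorb1)
qed

lemma subspace_span: "subspace (span S)"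
  unfolding vsubspace_def
proof (intro conjI ballI allI)
  show "0 \<in> span S"
    using sum_scale_in_span[of "{}" S] by simp
next
  fix x y assume "x \<in> span S" "y \<in> span S"
  then obtain T1 c1 T2 c2
    where x: "x = (\<Sum>v\<in>T1. sm (c1 v) v)" "finite T1" "T1 \<subseteq> S"
      and y: "y = (\<Sum>v\<in>T2. sm (c2 v) v)" "finite T2" "T2 \<subseteq> S"
    unfolding vspan_def by blast
  define c where "c v = (if v \<in> T1 then c1 v else 0) + (if v \<in> T2 then c2 v else 0)" for v
  have "x = (\<Sum>v\<in>T1 \<union> T2. sm (if v \<in> T1 then c1 v else 0) v)"
    using x y sum_scale_extend[of "T1 \<union> T2" T1 c1] by simp
  moreover have "y = (\<Sum>v\<in>T1 \<union> T2. sm (if v \<in> T2 then c2 v else 0) v)"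
    using x y sum_scale_extend[of "T1 \<union> T2" T2 c2] by simp
  ultimately have "x + y = (\<Sum>v\<in>T1 \<union> T2. sm (c v) v)"
    by (simp add: c_def scale_left_distrib sum.distrib)
  with x y show "x + y \<in> span S"
    by (simp add: sum_scale_in_span)
next
  fix a x assume "x \<in> span S"
  then obtain T c where x: "x = (\<Sum>v\<in>T. sm (c v) v)" "finite T" "T \<subseteq> S"
    unfolding vspan_def by blast
  then have "sm a x = (\<Sum>v\<in>T. sm (a * c v) v)"
    by (simp add: scale_sum_right scale_scale)
  with x show "sm a x \<in> span S"
    by (simp add: sum_scale_in_span)
qed

lemma span_superset: "S \<subseteq> span S"
proof
  fix x assume "x \<in> S"
  then have "(\<Sum>v\<in>{x}. sm 1 v) \<in> span S"
    by (intro sum_scale_in_span) auto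
  then show "x \<in> span S" by simp
qed

lemma span_minimal: "S \<subseteq> U \<Longrightarrow> subspace U \<Longrightarrow> span S \<subseteq> U"
  unfolding vspan_def by (auto intro!: subspace_sum subspace_scale)

lemma span_mono: "S \<subseteq> T \<Longrightarrow> span S \<subseteq> span T"
  using span_minimal span_superset subspace_span by (metis order_trans)

lemma span_empty: "span {} = {0}"
  using span_minimal[of "{}" "{0}"] subspace_0[OF subspace_span]
  by (auto simp: vsubspace_def)

lemma in_span_insert_exchange:
  assumes s: "s \<in> span (insert t A)" and s_notin: "s \<notin> span A"
  shows "t \<in> span (insert s A)"
proof -
  obtain T c where T: "s = (\<Sum>v\<in>T. sm (c v) v)" "finite T" "T \<subseteq> insert t A"
    using s unfolding vspan_def by blast
  define r where "r = (\<Sum>v\<in>T - {t}. sm (c v) v)"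
  have r: "r \<in> span A"
    unfolding r_def using T by (intro sum_scale_in_span) auto
  have "t \<in> T"
  proof (rule ccontr)
    assume "t \<notin> T"
    then have "s = r" using T(1) by (simp add: r_def)
    with r s_notin show False by simp
  qed
  then have s_eq: "s = sm (c t) t + r"
    using T by (simp add: r_def sum.remove)
  with r s_notin have "c t \<noteq> 0" by auto
  with s_eq have "t = sm (inverse (c t)) s + sm (inverse (c t)) (- r)"
    by (simp flip: scale_right_distrib)
  moreover have "sm (inverse (c t)) s \<in> span (insert s A)"
    using span_superset subspace_span subspace_scale by blast
  moreover have "sm (inverse (c t)) (- r) \<in> span (insert s A)"
    using r span_mono[of A "insert s A"] subspace_span subspace_neg subspace_scale by blast
  ultimately show ?thesis
    using subspace_span subspace_add by metis
qed

lemma independentD: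
  "independent S \<Longrightarrow> finite T \<Longrightarrow> T \<subseteq> S \<Longrightarrow> (\<Sum>v\<in>T. sm (c v) v) = 0 \<Longrightarrow> v \<in> T \<Longrightarrow> c v = 0"
  unfolding vindependent_def by blast

lemma independent_subset: "independent S \<Longrightarrow> T \<subseteq> S \<Longrightarrow> independent T"
  unfolding vindependent_def by (meson order_trans)

lemma independent_empty: "independent {}"
  unfolding vindependent_def by auto

lemma not_in_span_Diff:
  assumes "independent S" "x \<in> S"
  shows "x \<notin> span (S - {x})"
proof
  assume "x \<in> span (S - {x})"
  then obtain T c where T: "x = (\<Sum>v\<in>T. sm (c v) v)" "finite T" "T \<subseteq> S - {x}"
    unfolding vspan_def by blast
  define c' where "c' = c(x := - 1)"
  have "x \<notin> T" using T(3) by blast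
  then have "(\<Sum>v\<in>T. sm (c' v) v) = x"
    using T(1) by (auto simp: c'_def intro!: sum.cong)
  moreover have "c' x = - 1"
    by (simp add: c'_def)
  ultimately have "(\<Sum>v\<in>insert x T. sm (c' v) v) = 0"
    using T(2) \<open>x \<notin> T\<close> by (simp add: scale_minus_left)
  then have "c' x = 0"
    using assms T by (intro independentD[of S "insert x T"]) auto
  then show False by (simp add: c'_def)
qed

lemma independent_0: "independent S \<Longrightarrow> 0 \<notin> S"
  using not_in_span_Diff subspace_0[OF subspace_span] by blast

lemma independent_insert:
  assumes S: "independent S" and x: "x \<notin> span S"
  shows "independent (insert x S)"
  unfolding vindependent_def
proof (intro allI impI ballI)
  fix T c v
  assume T: "finite T \<and> T \<subseteq> insert x S \<and> (\<Sum>v\<in>T. sm (c v) v) = 0" and v: "v \<in> T"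
  define r where "r = (\<Sum>v\<in>T - {x}. sm (c v) v)"
  have r: "r \<in> span S"
    unfolding r_def using T by (intro sum_scale_in_span) auto
  have remove: "sm (c x) x + r = 0" if "x \<in> T"
    using T that sum.remove[of T x "\<lambda>v. sm (c v) v"] by (simp add: r_def)
  have cx: "c x = 0" if "x \<in> T"
  proof (rule ccontr)
    assume "c x \<noteq> 0"
    then have "x = sm (inverse (c x)) (sm (c x) x)" by simp
    also have "sm (c x) x = - r"
      using remove[OF that] by (simp add: eq_neg_iff_add_eq_0)
    finally have "x = sm (inverse (c x)) (- r)" .
    moreover have "sm (inverse (c x)) (- r) \<in> span S"
      using r subspace_span subspace_neg subspace_scale by blast
    ultimately show False
      using x by simp
  qed
  have "r = 0"
    using T remove cx by (cases "x \<in> T") (simp_all add: r_def)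
  then have "c v = 0" if "v \<in> T - {x}"
    using S T that unfolding r_def by (intro independentD[of S "T - {x}"]) auto
  with v cx show "c v = 0" by blast
qed

lemma independent_Un:
  assumes S: "independent S" and T: "independent T" and ST: "span S \<inter> span T = {0}"
  shows "independent (S \<union> T)"
  unfolding vindependent_def
proof (intro allI impI ballI)
  fix F c v
  assume F: "finite F \<and> F \<subseteq> S \<union> T \<and> (\<Sum>v\<in>F. sm (c v) v) = 0" and v: "v \<in> F"
  define a where "a = (\<Sum>v\<in>F \<inter> S. sm (c v) v)"
  define b where "b = (\<Sum>v\<in>F - S. sm (c v) v)"
  have "a + b = 0"
    using F by (simp add: a_def b_def flip: sum.Int_Diff)
  then have "b = - a" by (simp add: eq_neg_iff_add_eq_0 add.commute)
  moreover have "a \<in> span S" "b \<in> span T"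
    unfolding a_def b_def using F by (auto intro!: sum_scale_in_span)
  ultimately have "b \<in> span S \<inter> span T"
    using subspace_span subspace_neg by blast
  with ST \<open>a + b = 0\<close> have a0: "a = 0" and b0: "b = 0" by auto
  show "c v = 0"
  proof (cases "v \<in> S")
    case True
    with S F v a0 show ?thesis
      unfolding a_def by (intro independentD[of S "F \<inter> S"]) auto
  next
    case False
    with T F v b0 show ?thesis
      unfolding b_def by (intro independentD[of T "F - S"]) auto
  qed
qed

lemma span_Int_span_of_disjoint:
  assumes B: "independent B" and "C \<subseteq> B" "D \<subseteq> B" "C \<inter> D = {}"
  shows "span C \<inter> span D = {0}"
proof (intro equalityI subsetI)
  fix x assume "x \<in> span C \<inter> span D"
  then obtain T1 c1 T2 c2
    where T1: "x = (\<Sum>v\<in>T1. sm (c1 v) v)" "finite T1" "T1 \<subseteq> C"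
      and T2: "x = (\<Sum>v\<in>T2. sm (c2 v) v)" "finite T2" "T2 \<subseteq> D"
    unfolding vspan_def by blast
  define c where "c v = (if v \<in> T1 then c1 v else - c2 v)" for v
  have disj: "T1 \<inter> T2 = {}" using T1(3) T2(3) assms(4) by blast
  have "(\<Sum>v\<in>T1 \<union> T2. sm (c v) v) = (\<Sum>v\<in>T1. sm (c v) v) + (\<Sum>v\<in>T2. sm (c v) v)"
    using T1(2) T2(2) disj by (rule sum.union_disjoint)
  also have "(\<Sum>v\<in>T1. sm (c v) v) = x"
    unfolding T1(1) by (rule sum.cong) (simp_all add: c_def)
  also have "(\<Sum>v\<in>T2. sm (c v) v) = (\<Sum>v\<in>T2. - sm (c2 v) v)"
    using disj by (intro sum.cong) (auto simp: c_def scale_minus_left)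
  also have "\<dots> = - x"
    unfolding T2(1) by (simp add: sum_negf)
  finally have c0: "c v = 0" if "v \<in> T2" for v
    using B T1 T2 assms(2,3) that by (intro independentD[of B "T1 \<union> T2"]) auto
  have "c2 v = 0" if "v \<in> T2" for v
  proof -
    have "v \<notin> T1" using that disj by blast
    with c0[OF that] show ?thesis by (simp add: c_def)
  qed
  then show "x \<in> {0}"
    unfolding T2(1) by simp
qed (simp add: subspace_0 subspace_span)

lemma independent_eq_if_subset_spanning:
  assumes "independent S" "T \<subseteq> S" "S \<subseteq> span T"
  shows "S = T"
proof (rule ccontr)
  assume "S \<noteq> T"
  with assms(2) obtain x where x: "x \<in> S" "x \<notin> T" by blast
  then have "span T \<subseteq> span (S - {x})"
    using assms(2) by (intro span_mono) auto
  with assms(1,3) x not_in_span_Diff show False by blast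
qed

lemma span_exchange:
  assumes "t \<in> T" "s \<in> span T" "s \<notin> span (T - {t})"
  shows "span T \<subseteq> span (insert s (T - {t}))"
proof -
  have "s \<in> span (insert t (T - {t}))"
    using assms(1,2) by (simp add: insert_absorb)
  then have "t \<in> span (insert s (T - {t}))"
    using assms(3) by (rule in_span_insert_exchange)
  then have "T \<subseteq> span (insert s (T - {t}))"
    using span_superset[of "insert s (T - {t})"] by blast
  then show ?thesis
    by (rule span_minimal[OF _ subspace_span])
qed

lemma spanning_exchange_step:
  assumes T: "finite T" and S: "S \<subseteq> span T" and "\<not> T \<subseteq> S"
  obtains T' where "finite T'" "card T' \<le> card T" "S \<subseteq> span T'" "card (T' - S) < card (T - S)"
proof -
  obtain t where t: "t \<in> T" "t \<notin> S"
    using assms(3) by blast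
  have fewer: "card (T - {t} - S) < card (T - S)"
    using T t by (intro psubset_card_mono) auto
  show thesis
  proof (cases "S \<subseteq> span (T - {t})")
    case True
    with T fewer show thesis
      by (intro that[of "T - {t}"]) (auto simp: card_Diff1_le)
  next
    case False
    then obtain s where s: "s \<in> S" "s \<notin> span (T - {t})" by blast
    then have "s \<notin> T - {t}"
      using span_superset[of "T - {t}"] by blast
    with T t have "card (insert s (T - {t})) = card T"
      using card.remove[of T t] by simp
    moreover have "S \<subseteq> span (insert s (T - {t}))"
      using S span_exchange[OF t(1) _ s(2)] s(1) by blast
    moreover have "insert s (T - {t}) - S = T - {t} - S"
      using s(1) by blast
    ultimately show thesis
      using T fewer by (intro that[of "insert s (T - {t})"]) auto
  qed
qed

lemma independent_card_le_spanning:
  assumes "finite T" "independent S" "S \<subseteq> span T"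
  shows "finite S \<and> card S \<le> card T"
  using assms
proof (induction "card (T - S)" arbitrary: T rule: less_induct)
  case less
  show ?case
  proof (cases "T \<subseteq> S")
    case True
    with less.prems independent_eq_if_subset_spanning show ?thesis by blast
  next
    case False
    with less.prems(1,3) obtain T'
      where "finite T'" "card T' \<le> card T" "S \<subseteq> span T'" "card (T' - S) < card (T - S)"
      by (rule spanning_exchange_step)
    with less.hyps[of T'] less.prems(2) show ?thesis by fastforce
  qed
qed

end

section \<open>Dimension\<close>

locale fin_dim_left_vector_space =
  left_vector_space sm for sm :: "'k::division_ring \<Rightarrow> 'v::ab_group_add \<Rightarrow> 'v" +
  assumes findim: "findim sm"
begin

lemma independent_bounded:
  obtains N where "\<And>S. independent S \<Longrightarrow> finite S \<and> card S \<le> N"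
proof -
  obtain B where B: "finite B" "span B = UNIV"
    using findim unfolding findim_def by blast
  show thesis
    by (rule that[of "card B"]) (use independent_card_le_spanning[OF B(1)] B(2) in auto)
qed

lemma basis_extension:
  assumes U: "subspace U" and S: "independent S" "S \<subseteq> U"
  obtains B where "S \<subseteq> B" "finite B" "vbasis sm U B"
proof -
  obtain N where N: "\<And>S. independent S \<Longrightarrow> finite S \<and> card S \<le> N"
    using independent_bounded by blast
  define P where "P B \<longleftrightarrow> S \<subseteq> B \<and> B \<subseteq> U \<and> independent B" for B
  have "P S" "\<forall>B. P B \<longrightarrow> card B < N + 1"
    using S N unfolding P_def by (auto simp: less_Suc_eq_le)
  then obtain B where B: "P B" and max: "\<And>B'. P B' \<Longrightarrow> card B' \<le> card B"
    using ex_has_greatest_nat[of P S card "N + 1"] by blast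
  have B': "S \<subseteq> B" "B \<subseteq> U" "independent B" "finite B"
    using B N unfolding P_def by auto
  have "U \<subseteq> span B"
  proof
    fix x assume x: "x \<in> U"
    show "x \<in> span B"
    proof (rule ccontr)
      assume "x \<notin> span B"
      with B' x have "P (insert x B)" "x \<notin> B"
        using independent_insert span_superset[of B] unfolding P_def by auto
      with max[of "insert x B"] B'(4) show False by simp
    qed
  qed
  with B' U have "vbasis sm U B"
    unfolding vbasis_def using span_minimal by blast
  with B' that show thesis by blast
qed

lemma exists_basis:
  assumes "subspace U"
  obtains B where "finite B" "vbasis sm U B"
  using basis_extension[OF assms independent_empty] by blast

lemma dim_eq_card:
  assumes B: "vbasis sm U B" "finite B"
  shows "dim U = card B"
proof -
  define B' where "B' = (SOME B. finite B \<and> vbasis sm U B)"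
  have B': "finite B'" "vbasis sm U B'"
    using someI_ex[of "\<lambda>B. finite B \<and> vbasis sm U B"] B unfolding B'_def by blast+
  have "card B' \<le> card B"
    using B B' independent_card_le_spanning[of B B'] unfolding vbasis_def by auto
  moreover have "card B \<le> card B'"
    using B B' independent_card_le_spanning[of B' B] unfolding vbasis_def by auto
  moreover have "dim U = card B'"
    unfolding vdim_def B'_def ..
  ultimately show ?thesis by linarith
qed

lemma dim_span: "independent S \<Longrightarrow> finite S \<Longrightarrow> dim (span S) = card S"
  by (rule dim_eq_card) (simp_all add: vbasis_def span_superset)

lemma card_le_dim:
  assumes "subspace U" "independent S" "S \<subseteq> U"
  shows "finite S \<and> card S \<le> dim U"
proof -
  obtain B where "S \<subseteq> B" "finite B" "vbasis sm U B"
    using basis_extension[OF assms] .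
  then show ?thesis
    using dim_eq_card card_mono finite_subset by metis
qed

lemma dim_mono:
  assumes "subspace X" "subspace Y" "X \<subseteq> Y"
  shows "dim X \<le> dim Y"
proof -
  obtain B where B: "finite B" "vbasis sm X B"
    using exists_basis[OF assms(1)] .
  then have "independent B" "B \<subseteq> Y"
    using assms(3) unfolding vbasis_def by auto
  then have "card B \<le> dim Y"
    using card_le_dim[OF assms(2)] by blast
  with B show ?thesis
    by (simp add: dim_eq_card)
qed

lemma subspace_eq_if_dim_le:
  assumes X: "subspace X" and Y: "subspace Y" and "X \<subseteq> Y" "dim Y \<le> dim X"
  shows "X = Y"
proof -
  obtain C where C: "finite C" "vbasis sm X C"
    using exists_basis[OF X] .
  then have "independent C" "C \<subseteq> Y"
    using assms(3) unfolding vbasis_def by auto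
  then obtain B where B: "C \<subseteq> B" "finite B" "vbasis sm Y B"
    using basis_extension[OF Y] by metis
  have "card B \<le> card C"
    using assms(4) C B by (simp add: dim_eq_card)
  with B have "C = B"
    using card_seteq by blast
  with B C show ?thesis
    unfolding vbasis_def by simp
qed

lemma dim_psubset:
  assumes "subspace X" "subspace Y" "X \<subset> Y"
  shows "dim X < dim Y"
proof -
  have "dim X \<le> dim Y"
    using assms dim_mono by blast
  moreover have "dim X \<noteq> dim Y"
    using assms subspace_eq_if_dim_le[of X Y] by auto
  ultimately show ?thesis by simp
qed

lemma dim_eq_0_iff:
  assumes "subspace X"
  shows "dim X = 0 \<longleftrightarrow> X = {0}"
proof
  assume "dim X = 0"
  moreover obtain B where "finite B" "vbasis sm X B"
    using exists_basis[OF assms] .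
  ultimately show "X = {0}"
    by (simp add: dim_eq_card vbasis_def span_empty)
next
  assume "X = {0}"
  then have "vbasis sm X {}"
    by (simp add: vbasis_def span_empty independent_empty)
  then show "dim X = 0"
    by (simp add: dim_eq_card)
qed

lemma dim_pos_iff:
  assumes "subspace X"
  shows "0 < dim X \<longleftrightarrow> (\<exists>x\<in>X. x \<noteq> 0)"
  using dim_eq_0_iff[OF assms] subspace_0[OF assms] by auto

lemma dim_add_le_dim_Int:
  assumes X: "subspace X" and Y: "subspace Y" and Z: "subspace Z" and "X \<subseteq> Z" "Y \<subseteq> Z"
  shows "dim X + dim Y \<le> dim Z + dim (X \<inter> Y)"
proof -
  obtain C where C: "finite C" "vbasis sm (X \<inter> Y) C"
    using exists_basis[OF subspace_Int[OF X Y]] .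
  then have "independent C" "C \<subseteq> Y"
    unfolding vbasis_def by auto
  then obtain BY where BY: "C \<subseteq> BY" "finite BY" "vbasis sm Y BY"
    by (rule basis_extension[OF Y])
  obtain BX where BX: "finite BX" "vbasis sm X BX"
    using exists_basis[OF X] .
  define E where "E = BY - C"
  have "span E \<inter> span C = {0}"
    using BY unfolding E_def vbasis_def by (intro span_Int_span_of_disjoint) auto
  moreover have "span E \<subseteq> Y"
    using BY span_mono[of E BY] unfolding E_def vbasis_def by auto
  moreover have "span C = X \<inter> Y" "span BX = X"
    using C BX unfolding vbasis_def by auto
  ultimately have disj: "span BX \<inter> span E = {0}"
    using subspace_0[OF subspace_span] by blast
  have "independent BX" "independent E"
    using BX BY independent_subset unfolding E_def vbasis_def by auto
  then have indep: "independent (BX \<union> E)"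
    using disj by (rule independent_Un)
  have "BX \<inter> E \<subseteq> span BX \<inter> span E"
    using span_superset[of BX] span_superset[of E] by blast
  then have "BX \<inter> E = {}"
    using disj independent_0[OF indep] by auto
  then have "card (BX \<union> E) = card BX + (card BY - card C)"
    using BX(1) BY(1,2) C(1) unfolding E_def by (simp add: card_Un_disjoint card_Diff_subset)
  moreover have "BX \<union> E \<subseteq> Z"
    using BX BY assms(4,5) unfolding E_def vbasis_def by auto
  then have "card (BX \<union> E) \<le> dim Z"
    using card_le_dim[OF Z indep] by blast
  moreover have "card C \<le> card BY"
    using BY by (simp add: card_mono)
  ultimately show ?thesis
    using BX BY C by (simp add: dim_eq_card)
qed

lemma exists_Sub_between:
  assumes X: "subspace X" and Y: "subspace Y" and "X \<subseteq> Y" "dim X \<le> m" "m \<le> dim Y"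
  shows "\<exists>U \<in> Sub sm m. X \<subseteq> U \<and> U \<subseteq> Y"
proof -
  obtain C where C: "finite C" "vbasis sm X C"
    using exists_basis[OF X] .
  then have "independent C" "C \<subseteq> Y"
    using assms(3) unfolding vbasis_def by auto
  then obtain B where B: "C \<subseteq> B" "finite B" "vbasis sm Y B"
    by (rule basis_extension[OF Y])
  have card_C: "card C \<le> m"
    using assms(4) C by (simp add: dim_eq_card)
  have "m - card C \<le> card (B - C)"
    using assms(5) B C by (simp add: dim_eq_card card_Diff_subset)
  then obtain D where D: "D \<subseteq> B - C" "card D = m - card C"
    using obtain_subset_with_card_n by metis
  have fin: "finite (C \<union> D)" and sub: "C \<union> D \<subseteq> B"
    using B D finite_subset by auto
  have "independent (C \<union> D)"
    using B sub independent_subset unfolding vbasis_def by blast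
  moreover have "card (C \<union> D) = m"
    using D card_C fin card_Un_disjoint[of C D] by auto
  ultimately have "span (C \<union> D) \<in> Sub sm m"
    using fin by (simp add: Sub_def dim_span subspace_span)
  moreover have "X \<subseteq> span (C \<union> D)"
    using C span_mono[of C "C \<union> D"] unfolding vbasis_def by auto
  moreover have "span (C \<union> D) \<subseteq> Y"
    using B sub span_mono[OF sub] unfolding vbasis_def by blast
  ultimately show ?thesis by blast
qed

lemma exists_complement:
  assumes A: "subspace A" and "dim A + m = dim UNIV"
  shows "\<exists>U \<in> Sub sm m. U \<inter> A = {0}"
proof -
  obtain C where C: "finite C" "vbasis sm A C"
    using exists_basis[OF A] .
  then have "independent C" "C \<subseteq> UNIV"
    unfolding vbasis_def by auto
  then obtain B where B: "C \<subseteq> B" "finite B" "vbasis sm UNIV B"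
    by (rule basis_extension[OF subspace_UNIV])
  define D where "D = B - C"
  have indep: "independent D"
    using B independent_subset unfolding D_def vbasis_def by blast
  have "span D \<inter> A = {0}"
    using B C span_Int_span_of_disjoint[of B D C] unfolding D_def vbasis_def by auto
  moreover have "dim (span D) = m"
    using assms(2) B C indep by (simp add: D_def dim_span dim_eq_card card_Diff_subset)
  ultimately show ?thesis
    using subspace_span[of D] unfolding Sub_def by blast
qed

section \<open>Subspaces meeting a fixed subspace\<close>

definition Sub_meeting :: "nat \<Rightarrow> 'v set \<Rightarrow> 'v set set" where
  "Sub_meeting m A = {U \<in> Sub sm m. 0 < dim (U \<inter> A)}"

lemma pencil_Int:
  assumes H: "H \<in> Sub sm (m - 1)" and U: "U \<in> Sub sm m" "H \<subseteq> U" and U': "U' \<in> Sub sm m" "H \<subseteq> U'"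
    and "U \<noteq> U'"
  shows "U \<inter> U' = H"
proof -
  have sub: "subspace H" "subspace U" "subspace U'" "subspace (U \<inter> U')"
    using H U U' by (auto simp: Sub_def subspace_Int)
  have "\<not> U \<subseteq> U'"
    using subspace_eq_if_dim_le[of U U'] sub U U' \<open>U \<noteq> U'\<close> by (auto simp: Sub_def)
  then have "dim (U \<inter> U') < m"
    using dim_psubset[of "U \<inter> U'" U] sub U by (auto simp: Sub_def)
  then have "dim (U \<inter> U') \<le> dim H"
    using H by (simp add: Sub_def)
  then show ?thesis
    using subspace_eq_if_dim_le[of H "U \<inter> U'"] sub U U' by (simp add: Sub_def)
qed

lemma pencil_member_through:
  assumes H: "H \<in> Sub sm (m - 1)" and B: "B \<in> Sub sm (m + 1)" "H \<subseteq> B"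
    and v: "v \<in> B" and m: "1 \<le> m"
  shows "\<exists>U \<in> Sub sm m. H \<subseteq> U \<and> U \<subseteq> B \<and> v \<in> U"
proof (cases "v \<in> H")
  case True
  with exists_Sub_between[of H B m] H B show ?thesis
    by (auto simp: Sub_def)
next
  case False
  obtain C where C: "finite C" "vbasis sm H C"
    using exists_basis H by (auto simp: Sub_def)
  then have "independent (insert v C)" "v \<notin> C"
    using False independent_insert unfolding vbasis_def by auto
  moreover have "card (insert v C) = m"
    using C H m \<open>v \<notin> C\<close> by (simp add: dim_eq_card Sub_def)
  ultimately have "span (insert v C) \<in> Sub sm m"
    using C by (simp add: Sub_def dim_span subspace_span)
  moreover have "H \<subseteq> span (insert v C)" "v \<in> span (insert v C)"
    using C span_mono[of C "insert v C"] span_superset[of "insert v C"] unfolding vbasis_def by auto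
  moreover have "span (insert v C) \<subseteq> B"
    using C B v by (intro span_minimal) (auto simp: vbasis_def Sub_def)
  ultimately show ?thesis by blast
qed

lemma pencil_subset_Sub_meeting:
  assumes A: "subspace A" and H: "H \<in> Sub sm (m - 1)" and B: "B \<in> Sub sm (m + 1)"
    and l: "l = {U \<in> Sub sm m. H \<subseteq> U \<and> U \<subseteq> B}"
    and x: "x \<in> l \<inter> Sub_meeting m A" and y: "y \<in> l \<inter> Sub_meeting m A" and "x \<noteq> y"
  shows "l \<subseteq> Sub_meeting m A"
proof
  fix U assume "U \<in> l"
  then have U: "U \<in> Sub sm m" "H \<subseteq> U" "U \<subseteq> B"
    using l by auto
  have x': "x \<in> Sub sm m" "H \<subseteq> x" "x \<subseteq> B" "0 < dim (x \<inter> A)"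
    and y': "y \<in> Sub sm m" "H \<subseteq> y" "y \<subseteq> B" "0 < dim (y \<inter> A)"
    using x y l by (auto simp: Sub_meeting_def)
  have sub: "subspace H" "subspace B" "subspace U" "subspace x" "subspace y"
    using H B U x' y' by (auto simp: Sub_def)
  have "x \<inter> y = H"
    using pencil_Int H x' y' \<open>x \<noteq> y\<close> by blast
  then have "(x \<inter> A) \<inter> (y \<inter> A) = H \<inter> A" by blast
  moreover have "dim (x \<inter> A) + dim (y \<inter> A) \<le> dim (B \<inter> A) + dim ((x \<inter> A) \<inter> (y \<inter> A))"
    using x'(3) y'(3)
    by (intro dim_add_le_dim_Int) (auto intro: subspace_Int sub A)
  ultimately have "dim (x \<inter> A) + dim (y \<inter> A) \<le> dim (B \<inter> A) + dim (H \<inter> A)"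
    by simp
  moreover have "dim U + dim (B \<inter> A) \<le> dim B + dim (U \<inter> (B \<inter> A))"
    using U(3) by (intro dim_add_le_dim_Int) (auto intro: subspace_Int sub A)
  moreover have "dim (U \<inter> (B \<inter> A)) \<le> dim (U \<inter> A)"
    by (intro dim_mono) (auto intro: subspace_Int sub A)
  moreover have "dim (H \<inter> A) \<le> dim (U \<inter> A)"
    using U(2) by (intro dim_mono) (auto intro: subspace_Int sub A)
  ultimately have "0 < dim (U \<inter> A)"
    using U B x' y' by (simp add: Sub_def)
  with U show "U \<in> Sub_meeting m A"
    by (simp add: Sub_meeting_def)
qed

lemma pencil_meets_Sub_meeting:
  assumes A: "subspace A" and dim_A: "dim A + m = dim UNIV" and m: "1 \<le> m"
    and H: "H \<in> Sub sm (m - 1)" and B: "B \<in> Sub sm (m + 1)" "H \<subseteq> B"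
  shows "{U \<in> Sub sm m. H \<subseteq> U \<and> U \<subseteq> B} \<inter> Sub_meeting m A \<noteq> {}"
proof -
  have sB: "subspace B" using B by (simp add: Sub_def)
  have "dim B + dim A \<le> dim UNIV + dim (B \<inter> A)"
    using dim_add_le_dim_Int[OF sB A subspace_UNIV] by simp
  with dim_A B have "0 < dim (B \<inter> A)"
    by (simp add: Sub_def)
  then obtain w where w: "w \<in> B" "w \<in> A" "w \<noteq> 0"
    using dim_pos_iff[OF subspace_Int[OF sB A]] by blast
  then obtain U where U: "U \<in> Sub sm m" "H \<subseteq> U" "U \<subseteq> B" "w \<in> U"
    using pencil_member_through[OF H B] m by blast
  then have "0 < dim (U \<inter> A)"
    using dim_pos_iff[of "U \<inter> A"] subspace_Int[OF _ A] w by (auto simp: Sub_def)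
  with U show ?thesis
    by (auto simp: Sub_meeting_def)
qed

lemma hyperplane_Sub_meeting:
  assumes A: "subspace A" and dim_A: "dim A + m = dim UNIV" and m: "1 \<le> m"
  shows "hyperplane (grassmann sm m) (Sub_meeting m A)"
  unfolding hyperplane_def pls_subspace_def
proof (intro conjI ballI impI)
  show "Sub_meeting m A \<subseteq> fst (grassmann sm m)"
    by (auto simp: Sub_meeting_def)
  obtain U where U: "U \<in> Sub sm m" "U \<inter> A = {0}"
    using exists_complement[OF A dim_A] by blast
  then have "dim (U \<inter> A) = 0"
    using dim_eq_0_iff[of "U \<inter> A"] subspace_Int[of U A] A by (simp add: Sub_def)
  then have "U \<notin> Sub_meeting m A"
    by (simp add: Sub_meeting_def)
  with U(1) show "Sub_meeting m A \<noteq> fst (grassmann sm m)"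
    by auto
next
  fix l assume "l \<in> snd (grassmann sm m)"
  then obtain H B where HB: "H \<in> Sub sm (m - 1)" "B \<in> Sub sm (m + 1)" "H \<subseteq> B"
    "l = {U \<in> Sub sm m. H \<subseteq> U \<and> U \<subseteq> B}"
    by (rule grassmann_lineE)
  {
    assume "\<exists>x y. x \<noteq> y \<and> x \<in> l \<inter> Sub_meeting m A \<and> y \<in> l \<inter> Sub_meeting m A"
    then show "l \<subseteq> Sub_meeting m A"
      using pencil_subset_Sub_meeting[OF A HB(1,2,4)] by blast
  }
  show "l \<inter> Sub_meeting m A \<noteq> {}"
    using pencil_meets_Sub_meeting[OF A dim_A m HB(1-3)] HB(4) by simp
qed

lemma Sub_meeting_collinear:
  assumes W: "subspace W" and k: "1 \<le> k" and U: "U \<in> Sub sm k" and two: "2 \<le> dim (U \<inter> W)"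
    and "collinear_pts (grassmann sm k) U U'"
  shows "U' \<in> Sub_meeting k W"
proof -
  obtain l where "l \<in> snd (grassmann sm k)" "U \<in> l" "U' \<in> l"
    using assms(5) unfolding collinear_pts_def by blast
  then obtain H where H: "H \<in> Sub sm (k - 1)" "H \<subseteq> U" "H \<subseteq> U'" and U': "U' \<in> Sub sm k"
    by (elim grassmann_lineE) auto
  have sub: "subspace H" "subspace U" "subspace U'" "subspace (U \<inter> W)"
    using H U U' W by (auto simp: Sub_def subspace_Int)
  have "dim H + dim (U \<inter> W) \<le> dim U + dim (H \<inter> (U \<inter> W))"
    using H(2) by (intro dim_add_le_dim_Int sub) auto
  with H U k two have "0 < dim (H \<inter> (U \<inter> W))"
    by (simp add: Sub_def)
  moreover have "dim (H \<inter> (U \<inter> W)) \<le> dim (U' \<inter> W)"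
    using H(3) by (intro dim_mono) (auto intro: subspace_Int sub W)
  ultimately show ?thesis
    using U' by (simp add: Sub_meeting_def)
qed

lemma exists_Sub_pair_dim_Int_ge:
  assumes "j \<le> k1" "j \<le> k2" "k1 \<le> dim UNIV" "k2 \<le> dim UNIV"
  shows "\<exists>U1 \<in> Sub sm k1. \<exists>U2 \<in> Sub sm k2. j \<le> dim (U1 \<inter> U2)"
proof -
  have zero: "subspace {0}" "dim {0} = 0"
    using dim_eq_0_iff by (auto simp: vsubspace_def)
  obtain U1 where U1: "U1 \<in> Sub sm k1"
    using exists_Sub_between[OF zero(1) subspace_UNIV] zero assms(3) by auto
  then obtain P where P: "P \<in> Sub sm j" "P \<subseteq> U1"
    using exists_Sub_between[OF zero(1), of U1 j] zero assms(1) subspace_0 by (auto simp: Sub_def)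
  then obtain U2 where U2: "U2 \<in> Sub sm k2" "P \<subseteq> U2"
    using exists_Sub_between[of P UNIV k2] assms(2,4) subspace_UNIV by (auto simp: Sub_def)
  have "j \<le> dim (U1 \<inter> U2)"
    using dim_mono[of P "U1 \<inter> U2"] P U1 U2 by (auto simp: Sub_def subspace_Int)
  with U1 U2 show ?thesis by blast
qed

definition Sub_pairs_meeting :: "nat \<Rightarrow> nat \<Rightarrow> ('v set \<times> 'v set) set" where
  "Sub_pairs_meeting k1 k2 = {(U1, U2). U1 \<in> Sub sm k1 \<and> U2 \<in> Sub sm k2 \<and> 0 < dim (U1 \<inter> U2)}"

lemma nondegenerate_hyperplane_Sub_pairs_meeting:
  assumes k: "1 \<le> k1" "1 \<le> k2" and dim: "k1 + k2 = dim UNIV"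
  shows "nondegenerate_hyperplane (grassmann sm k1) (grassmann sm k2) (Sub_pairs_meeting k1 k2)"
proof -
  obtain U1 U2 where "U1 \<in> Sub sm k1" "U2 \<in> Sub sm k2"
    using exists_Sub_pair_dim_Int_ge[of 0 k1 k2] dim by auto
  show ?thesis
  proof (rule nondegenerate_hyperplaneI)
    show "(U1, U2) \<in> fst (grassmann sm k1) \<times> fst (grassmann sm k2)"
      using \<open>U1 \<in> Sub sm k1\<close> \<open>U2 \<in> Sub sm k2\<close> by simp
    fix a assume "a \<in> fst (grassmann sm k1) \<times> fst (grassmann sm k2)"
    then have "slice1 (Sub_pairs_meeting k1 k2) a = Sub_meeting k1 (snd a)"
      and "slice2 (Sub_pairs_meeting k1 k2) a = Sub_meeting k2 (fst a)"
      and "snd a \<in> Sub sm k2" "fst a \<in> Sub sm k1"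
      by (auto simp: slice1_def slice2_def Sub_meeting_def Sub_pairs_meeting_def Int_commute)
    with k dim show "hyperplane (grassmann sm k1) (slice1 (Sub_pairs_meeting k1 k2) a)"
      and "hyperplane (grassmann sm k2) (slice2 (Sub_pairs_meeting k1 k2) a)"
      by (auto simp: Sub_def intro!: hyperplane_Sub_meeting)
  qed (auto simp: Sub_pairs_meeting_def)
qed

lemma not_spiky_Sub_pairs_meeting:
  assumes k: "2 \<le> k1" "2 \<le> k2" "k1 \<le> dim UNIV" "k2 \<le> dim UNIV"
  shows "\<not> spiky (segre (grassmann sm k1) (grassmann sm k2)) (Sub_pairs_meeting k1 k2)"
proof -
  obtain U1 U2 where U: "U1 \<in> Sub sm k1" "U2 \<in> Sub sm k2" "2 \<le> dim (U1 \<inter> U2)"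
    using exists_Sub_pair_dim_Int_ge[of 2 k1 k2] k by blast
  have "y \<in> Sub_pairs_meeting k1 k2"
    if "collinear_pts (segre (grassmann sm k1) (grassmann sm k2)) (U1, U2) y" for y
    using that
  proof (cases rule: collinear_segreE)
    case (left x)
    with Sub_meeting_collinear[of U2 k1 U1 x] U k show ?thesis
      by (auto simp: Sub_def Sub_meeting_def Sub_pairs_meeting_def)
  next
    case (right z)
    with Sub_meeting_collinear[of U1 k2 U2 z] U k show ?thesis
      by (auto simp: Sub_def Sub_meeting_def Sub_pairs_meeting_def Int_commute)
  qed
  moreover have "(U1, U2) \<in> Sub_pairs_meeting k1 k2"
    using U by (simp add: Sub_pairs_meeting_def)
  ultimately show ?thesis
    unfolding spiky_def by blast
qed

end

theorem proposition4p17: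
  fixes sm :: "'k::division_ring \<Rightarrow> 'v::ab_group_add \<Rightarrow> 'v"
    and k1 k2 :: nat
  assumes "vs_axioms sm"
    and "findim sm"
    and "1 < k1" and "k1 < vdim sm UNIV - 1"
    and "k1 + k2 = vdim sm UNIV"
  shows "nondegenerate_hyperplane (grassmann sm k1) (grassmann sm k2)
           {(U1, U2). U1 \<in> Sub sm k1 \<and> U2 \<in> Sub sm k2 \<and> vdim sm (U1 \<inter> U2) > 0}
       \<and> \<not> spiky (segre (grassmann sm k1) (grassmann sm k2))
           {(U1, U2). U1 \<in> Sub sm k1 \<and> U2 \<in> Sub sm k2 \<and> vdim sm (U1 \<inter> U2) > 0}"
proof -
  interpret fin_dim_left_vector_space sm
    using assms(1,2) by unfold_locales
  have "2 \<le> k1" "2 \<le> k2" "k1 \<le> dim UNIV" "k2 \<le> dim UNIV"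
    using assms(3-5) by auto
  with assms(5) show ?thesis
    using nondegenerate_hyperplane_Sub_pairs_meeting[of k1 k2] not_spiky_Sub_pairs_meeting[of k1 k2]
    unfolding Sub_pairs_meeting_def by simp
qed

end
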